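(* Let $n\ge 1$ and let $f\in\mathcal{G}_1$ be $n$-ary, $f=2x_1\cdots x_n\left(\sum_{i=1}^n a_ix_i^2+\sum_{i=1}^n b_ix_i+c\right)$, with $a_i\neq0$ for some $i$. Then $2u_n\in C(f)$, where $u_n=x_1\cdots x_n(x_1+1)$.
   Context: All operations are on $\mathbb{Z}_8$. $\mathcal{G}_1$ is the set of all operations (of any arity $n\ge1$) of the form $2x_1\cdots x_n\left(\sum_{i=1}^n a_ix_i^2+\sum_{i=1}^n b_ix_i+c\right)$ with $a_i,b_i\in\{0,1\}$ and $c\in\{0,1,2,3\}$. For an operation $f$, $C(f)$ denotes the clone generated by $f$ together with binary addition and all unary constant operations. *)

theory Defs
  imports "HOL-Library.Numeral_Type"
begin

text \<open>The ring Z_8 is the numeral type 8. A finitary operation on Z_8 is a pair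
(n, phi) with arity n \<ge> 1 and phi :: (nat \<Rightarrow> 8) \<Rightarrow> 8, normalised so that phi only
looks at the arguments 0..n-1 (argument x_i of the paper is x (i-1)).\<close>

type_synonym z8 = "8"
type_synonym operation = "nat \<times> ((nat \<Rightarrow> z8) \<Rightarrow> z8)"

definition canon :: "nat \<Rightarrow> ((nat \<Rightarrow> z8) \<Rightarrow> z8) \<Rightarrow> (nat \<Rightarrow> z8) \<Rightarrow> z8" where
  "canon n \<phi> = (\<lambda>x. \<phi> (\<lambda>i. if i < n then x i else 0))"

definition mk_op :: "nat \<Rightarrow> ((nat \<Rightarrow> z8) \<Rightarrow> z8) \<Rightarrow> operation" where
  "mk_op n \<phi> = (n, canon n \<phi>)"

inductive_set clone_gen :: "operation set \<Rightarrow> operation set" for F where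
  gen: "g \<in> F \<Longrightarrow> g \<in> clone_gen F"
| proj: "1 \<le> n \<Longrightarrow> i < n \<Longrightarrow> mk_op n (\<lambda>x. x i) \<in> clone_gen F"
| comp: "(k, g) \<in> clone_gen F \<Longrightarrow> 1 \<le> n \<Longrightarrow> (\<forall>j<k. (n, h j) \<in> clone_gen F)
         \<Longrightarrow> mk_op n (\<lambda>x. g (\<lambda>j. h j x)) \<in> clone_gen F"

definition C :: "operation \<Rightarrow> operation set" where
  "C f = clone_gen ({f, mk_op 2 (\<lambda>x. x 0 + x 1)} \<union> {mk_op 1 (\<lambda>x. c) | c. True})"

definition G1_op :: "nat \<Rightarrow> (nat \<Rightarrow> z8) \<Rightarrow> (nat \<Rightarrow> z8) \<Rightarrow> z8 \<Rightarrow> operation" where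
  "G1_op n a b c = mk_op n (\<lambda>x. 2 * (\<Prod>i<n. x i) *
      ((\<Sum>i<n. a i * (x i)^2) + (\<Sum>i<n. b i * x i) + c))"

definition u_op :: "nat \<Rightarrow> (nat \<Rightarrow> z8) \<Rightarrow> z8" where
  "u_op n = (\<lambda>x. (\<Prod>i<n. x i) * (x 0 + 1))"

end

theory Submission
  imports Defs "HOL-Combinatorics.Permutations"
begin

(* After permuting the variables we may assume a_1 = 1. Substituting v for x_1 in f gives
   R(x) * g(v) with g(v) = 2 v (v^2 + b_1 v + K(x)), where R = x_2 ... x_n and K do not depend
   on x_1. Over Z_8 one has 3 g(t+1) + 6 g(t) + 5 g(1) + g(7t) = 2 t (t+1) whatever K is, because
   the K-terms add up to 16 K (2t+1). So this Z_8-linear combination of substitution instances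
   of f, which lies in C(f), is 2 x_1 R (x_1+1) = 2 u_n. *)

lemma clone_gen_compose:
  assumes "(k, g) \<in> clone_gen F" "1 \<le> n" "\<And>j. j < k \<Longrightarrow> mk_op n (h j) \<in> clone_gen F"
  shows "mk_op n (\<lambda>x. g (\<lambda>j. h j x)) \<in> clone_gen F"
proof -
  have "mk_op n (\<lambda>x. g (\<lambda>j. canon n (h j) x)) \<in> clone_gen F"
    using assms by (intro clone_gen.comp) (auto simp: mk_op_def)
  then show ?thesis by (simp add: mk_op_def canon_def cong: if_cong)
qed

lemma C_generator: "f \<in> C f"
  unfolding C_def by (rule clone_gen.gen) simp

lemma C_const:
  assumes "1 \<le> n"
  shows "mk_op n (\<lambda>_. d) \<in> C f"
proof -
  have "(1, canon 1 (\<lambda>_. d)) \<in> C f"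
    unfolding C_def mk_op_def[symmetric] by (rule clone_gen.gen) blast
  from clone_gen_compose[OF this[unfolded C_def] assms, of "\<lambda>_ x. x 0"] assms
  show ?thesis by (simp add: C_def canon_def clone_gen.proj)
qed

lemma C_add:
  assumes "1 \<le> n" "mk_op n \<phi> \<in> C f" "mk_op n \<psi> \<in> C f"
  shows "mk_op n (\<lambda>x. \<phi> x + \<psi> x) \<in> C f"
proof -
  have "(2, canon 2 (\<lambda>x. x 0 + x 1)) \<in> C f"
    unfolding C_def mk_op_def[symmetric] by (rule clone_gen.gen) simp
  from clone_gen_compose[OF this[unfolded C_def] assms(1), of "\<lambda>j. if j = 0 then \<phi> else \<psi>"] assms
  show ?thesis by (simp add: C_def canon_def)
qed

lemma C_of_nat_mult:
  assumes "1 \<le> n" "mk_op n \<phi> \<in> C f"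
  shows "mk_op n (\<lambda>x. of_nat m * \<phi> x) \<in> C f"
proof (induction m)
  case 0
  show ?case using C_const[OF assms(1)] by simp
next
  case (Suc m)
  from C_add[OF assms(1,2) Suc] show ?case by (simp add: algebra_simps)
qed

definition G1_poly :: "nat \<Rightarrow> (nat \<Rightarrow> z8) \<Rightarrow> (nat \<Rightarrow> z8) \<Rightarrow> z8 \<Rightarrow> (nat \<Rightarrow> z8) \<Rightarrow> z8" where
  "G1_poly n a b c x = 2 * (\<Prod>i<n. x i) * ((\<Sum>i<n. a i * (x i)^2) + (\<Sum>i<n. b i * x i) + c)"

lemma canon_G1_poly: "canon n (G1_poly n a b c) = G1_poly n a b c"
  by (simp add: fun_eq_iff canon_def G1_poly_def)

lemma G1_op_eq: "G1_op n a b c = (n, G1_poly n a b c)"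
  using canon_G1_poly by (simp add: G1_op_def mk_op_def G1_poly_def[abs_def])

lemma G1_poly_comp_permutes:
  assumes "\<sigma> permutes {..<n}"
  shows "G1_poly n a b c (\<lambda>i. x (\<sigma> i)) = G1_poly n (a \<circ> inv \<sigma>) (b \<circ> inv \<sigma>) c x"
  using prod.permute[OF assms, of x] sum.permute[OF assms, of "\<lambda>i. a (inv \<sigma> i) * (x i)^2"]
    sum.permute[OF assms, of "\<lambda>i. b (inv \<sigma> i) * x i"]
  by (simp add: G1_poly_def comp_def permutes_inverses(2)[OF assms])

lemma G1_poly_upd_first:
  assumes "a 0 = 1"
  shows "G1_poly (Suc m) a b c (x(0 := v)) = (\<Prod>i<m. x (Suc i)) *
    (2 * v * (v^2 + b 0 * v + ((\<Sum>i<m. a (Suc i) * (x (Suc i))^2) + (\<Sum>i<m. b (Suc i) * x (Suc i)) + c)))"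
  unfolding G1_poly_def prod.lessThan_Suc_shift sum.lessThan_Suc_shift
  using assms by (simp add: algebra_simps)

lemma G1_poly_permute_in_clone:
  assumes "(n, G1_poly n a b c) \<in> clone_gen F" "1 \<le> n" "\<sigma> permutes {..<n}"
  shows "(n, G1_poly n (a \<circ> inv \<sigma>) (b \<circ> inv \<sigma>) c) \<in> clone_gen F"
proof -
  have "mk_op n (\<lambda>x. G1_poly n a b c (\<lambda>j. x (\<sigma> j))) \<in> clone_gen F"
    using assms(1,2) by (rule clone_gen_compose)
      (auto intro!: clone_gen.proj simp: assms(2) permutes_in_image[OF assms(3), unfolded lessThan_iff])
  then show ?thesis
    by (simp add: G1_poly_comp_permutes[OF assms(3)] mk_op_def canon_G1_poly)
qed

lemma z8_cubic_combination:
  fixes t B K :: z8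
  assumes "B \<in> {0, 1}"
  defines "g \<equiv> \<lambda>v. 2 * v * (v^2 + B * v + K)"
  shows "3 * g (t + 1) + 6 * g t + 5 * g 1 + g (7 * t) = 2 * t * (t + 1)"
proof -
  have sixteen: "(16::z8) = 0" by simp
  have "3 * g (t + 1) + 6 * g t + 5 * g 1 + g (7 * t)
      = 2 * (3 * (t + 1)^3 + 6 * t^3 + 5 + 343 * t^3 + B * (3 * (t + 1)^2 + 6 * t^2 + 5 + 49 * t^2))
        + 16 * K * (2 * t + 1)"
    unfolding g_def by (simp add: power2_eq_square power3_eq_cube algebra_simps)
  also have "\<dots> = 2 * (3 * (t + 1)^3 + 6 * t^3 + 5 + 343 * t^3 + B * (3 * (t + 1)^2 + 6 * t^2 + 5 + 49 * t^2))"
    unfolding sixteen by simp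
  also have "\<dots> = 2 * t * (t + 1)"
  proof (induct t rule: bit0.induct)
    case (1 z)
    then have "z \<in> {0, 1, 2, 3, 4, 5, 6, 7}" by auto
    then show ?case using assms by auto
  qed
  finally show ?thesis .
qed

lemma two_u_op_in_C:
  assumes "(Suc m, G1_poly (Suc m) a b c) \<in> C f" "a 0 = 1" "b 0 \<in> {0, 1}"
  shows "mk_op (Suc m) (\<lambda>x. 2 * u_op (Suc m) x) \<in> C f"
proof -
  define G_at where "G_at \<tau> x = G1_poly (Suc m) a b c (x(0 := \<tau> x))" for \<tau> x
  have G_at_in_C: "mk_op (Suc m) (G_at \<tau>) \<in> C f" if \<tau>_in_C: "mk_op (Suc m) \<tau> \<in> C f" for \<tau>
  proof -
    have upd_in_C: "mk_op (Suc m) (\<lambda>x. (x(0 := \<tau> x)) j) \<in> C f" if "j < Suc m" for j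
      using \<tau>_in_C that by (cases "j = 0") (simp_all add: C_def clone_gen.proj)
    show ?thesis
      using clone_gen_compose[where h = "\<lambda>j x. (x(0 := \<tau> x)) j",
        OF assms(1)[unfolded C_def] _ upd_in_C[unfolded C_def]]
      unfolding G_at_def C_def by (simp add: fun_upd_def)
  qed
  have x0_in_C: "mk_op (Suc m) (\<lambda>x. x 0) \<in> C f"
    unfolding C_def by (rule clone_gen.proj) simp_all
  have combination_eq: "of_nat 3 * G_at (\<lambda>x. x 0 + 1) x + of_nat 6 * G_at (\<lambda>x. x 0) x
      + of_nat 5 * G_at (\<lambda>_. 1) x + G_at (\<lambda>x. of_nat 7 * x 0) x = 2 * u_op (Suc m) x" for x
  proof -
    define K where "K = (\<Sum>i<m. a (Suc i) * (x (Suc i))^2) + (\<Sum>i<m. b (Suc i) * x (Suc i)) + c"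
    define g where "g v = 2 * v * (v^2 + b 0 * v + K)" for v
    have "G_at \<tau> x = (\<Prod>i<m. x (Suc i)) * g (\<tau> x)" for \<tau>
      unfolding G_at_def g_def K_def by (rule G1_poly_upd_first[of a, OF assms(2)])
    then have "of_nat 3 * G_at (\<lambda>x. x 0 + 1) x + of_nat 6 * G_at (\<lambda>x. x 0) x
        + of_nat 5 * G_at (\<lambda>_. 1) x + G_at (\<lambda>x. of_nat 7 * x 0) x
        = (\<Prod>i<m. x (Suc i)) * (3 * g (x 0 + 1) + 6 * g (x 0) + 5 * g 1 + g (7 * x 0))"
      by (simp add: algebra_simps)
    also have "\<dots> = (\<Prod>i<m. x (Suc i)) * (2 * x 0 * (x 0 + 1))"
      unfolding g_def by (simp only: z8_cubic_combination[OF assms(3)])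
    also have "\<dots> = 2 * u_op (Suc m) x"
      unfolding u_op_def prod.lessThan_Suc_shift by (simp add: algebra_simps)
    finally show ?thesis .
  qed
  have "mk_op (Suc m) (\<lambda>x. of_nat 3 * G_at (\<lambda>x. x 0 + 1) x + of_nat 6 * G_at (\<lambda>x. x 0) x
      + of_nat 5 * G_at (\<lambda>_. 1) x + G_at (\<lambda>x. of_nat 7 * x 0) x) \<in> C f"
    by (intro C_add C_of_nat_mult G_at_in_C C_const x0_in_C) simp_all
  then show ?thesis
    by (simp only: combination_eq)
qed

theorem lemma4p3:
  fixes n :: nat and a b :: "nat \<Rightarrow> z8" and c :: z8
  assumes "n \<ge> 1"
    and "\<forall>i<n. a i \<in> {0, 1}" and "\<forall>i<n. b i \<in> {0, 1}"
    and "c \<in> {0, 1, 2, 3}"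
    and "\<exists>i<n. a i \<noteq> 0"
  shows "mk_op n (\<lambda>x. 2 * u_op n x) \<in> C (G1_op n a b c)"
proof -
  obtain m where n: "n = Suc m" using assms(1) by (cases n) auto
  obtain i where i: "i < n" "a i = 1" using assms(2,5) by auto
  define \<sigma> where "\<sigma> = transpose 0 i"
  have \<sigma>: "\<sigma> permutes {..<n}" using i(1) assms(1) unfolding \<sigma>_def by (intro permutes_swap_id) auto
  have "(n, G1_poly n a b c) \<in> C (G1_op n a b c)"
    using C_generator by (simp add: G1_op_eq)
  then have "(n, G1_poly n (a \<circ> \<sigma>) (b \<circ> \<sigma>) c) \<in> C (G1_op n a b c)"
    using G1_poly_permute_in_clone[OF _ assms(1) \<sigma>] by (simp add: C_def \<sigma>_def)
  moreover have "(a \<circ> \<sigma>) 0 = 1" "(b \<circ> \<sigma>) 0 \<in> {0, 1}"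
    using i assms(3) by (simp_all add: \<sigma>_def)
  ultimately show ?thesis unfolding n by (rule two_u_op_in_C)
qed

end
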